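(* In the setting of the context, let $i\in\{1,\dots,n\}$ and let $(x,y)\in\mathbb{Z}^2$ with $\gcd(x,y)=1$, $(x,y)\notin\mathbf{A}$, $0<y\le Y_S$, $|F(x,y)|\le h$ and $|L_i(x,y)|>\frac{1}{2y}$. Then $$|m(x,y)-\beta_i(x,y)|\le \frac72+2h^{1/n}Y_S.$$
   Context: Setting: $n\ge3$; $F(x,y)=\sum_{i=0}^s a_ix^{n_i}y^{n-n_i}\in\mathbb{Z}[x,y]$ of degree $n$, irreducible over $\mathbb{Q}$, all $a_i\neq0$, $0=n_0<\dots<n_s=n$, discriminant $D$. $R=n^{800\log^2n}$; $h$ a positive integer and $\kappa>1$ an integer with $h\le |D|^{\frac{1}{2(n-1)(2+1/\kappa)}}/\big((3R)^{n/2}(ns)^{2s+n}\big)$; $Y_S=e^6s(ns)^{2s/n}h^{1/(\kappa n)}$. Write $F(x,y)=a\prod_{i=1}^n(x-\alpha_iy)$ ($\alpha_i$ the roots of $F(x,1)$) and $L_i(x,y)=x-\alpha_iy$. A "solution" is a pair $(x,y)\in\mathbb{Z}^2$ with $\gcd(x,y)=1$ and $1\le|F(x,y)|\le h$, with $(x,y)$ and $(-x,-y)$ identified. Assume there is a solution with $0\le y\le Y_S$, and fix one such, $(x_0,y_0)$, with $y_0\ge0$ minimal. Index the roots so that $|L_1(x_0,y_0)|=\min_i|L_i(x_0,y_0)|$. There is at most one solution $(x^*,y^* )$ with $0<y^*\le Y_S$ and $|L_1(x^*,y^* )|<1/(2Y_S)$; let $\mathbf{A}=\{(x_0,y_0)\}$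 together with $(x^*,y^* )$ if it exists. For a primitive $(x,y)$ choose integers $x',y'$ with $x'y-xy'=1$ and set $\beta_j(x,y)=-L_j(x',y')/L_j(x,y)$ for $j=1,\dots,n$ (so that $F(ux+wx',uy+wy')=F(x,y)\prod_j(u-\beta_j(x,y)w)$), and let $m(x,y)$ be an integer with $|\mathrm{Re}\,\beta_1(x,y)-m(x,y)|\le 1/2$. *)

theory Defs
  imports "HOL-Analysis.Analysis" "HOL-Computational_Algebra.Computational_Algebra"
begin

definition binform :: "int poly \<Rightarrow> int \<Rightarrow> int \<Rightarrow> int" where
  "binform f x y = (\<Sum>k\<le>degree f. coeff f k * x ^ k * y ^ (degree f - k))"

definition nterms :: "int poly \<Rightarrow> nat" where
  "nterms f = card {k. coeff f k \<noteq> 0} - 1"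

definition Lf :: "(nat \<Rightarrow> complex) \<Rightarrow> nat \<Rightarrow> int \<Rightarrow> int \<Rightarrow> complex" where
  "Lf alpha j x y = of_int x - alpha j * of_int y"

text \<open>beta_j(x,y) = - L_j(x',y') / L_j(x,y), for a chosen (x',y') with x' y - x y' = 1.\<close>
definition beta :: "(nat \<Rightarrow> complex) \<Rightarrow> nat \<Rightarrow> int \<Rightarrow> int \<Rightarrow> int \<Rightarrow> int \<Rightarrow> complex" where
  "beta alpha j x y x' y' = - Lf alpha j x' y' / Lf alpha j x y"

definition disc :: "int poly \<Rightarrow> (nat \<Rightarrow> complex) \<Rightarrow> complex" where
  "disc f alpha = of_int (lead_coeff f) ^ (2 * degree f - 2) *
     (\<Prod>i\<in>{1..degree f}. \<Prod>j\<in>{i<..degree f}. (alpha i - alpha j) ^ 2)"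

definition is_solution :: "int poly \<Rightarrow> nat \<Rightarrow> int \<Rightarrow> int \<Rightarrow> bool" where
  "is_solution f h x y \<longleftrightarrow> coprime x y \<and> 1 \<le> \<bar>binform f x y\<bar> \<and> \<bar>binform f x y\<bar> \<le> int h"

definition R_const :: "nat \<Rightarrow> real" where
  "R_const n = real n powr (800 * (ln (real n)) ^ 2)"

definition Y_S :: "nat \<Rightarrow> nat \<Rightarrow> nat \<Rightarrow> nat \<Rightarrow> real" where
  "Y_S n s h \<kappa> = exp 6 * real s * (real n * real s) powr (2 * real s / real n)
                   * real h powr (1 / (real \<kappa> * real n))"

end

theory Submission imports Defs begin

text \<open>Unimodularity of the substitution gives
  \<open>\<beta>\<^sub>j(x,y) = -y'/y - 1/(y L\<^sub>j(x,y))\<close>, so \<open>\<beta>\<^sub>1\<close> and \<open>\<beta>\<^sub>i\<close> differ from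
  the common real number \<open>-y'/y\<close> by \<open>1/(y L\<^sub>1)\<close> and \<open>1/(y L\<^sub>i)\<close>. Hence
  \<open>|m - \<beta>\<^sub>i| \<le> 1/2 + 1/(y |L\<^sub>1|) + 1/(y |L\<^sub>i|)\<close>. Since \<open>(x,y)\<close> is a solution
  outside \<open>\<A>\<close> (irreducibility rules out \<open>F(x,y) = 0\<close>), \<open>|L\<^sub>1(x,y)| \<ge> 1/(2Y\<^sub>S)\<close>,
  and \<open>|L\<^sub>i(x,y)| > 1/(2y)\<close> by hypothesis; this gives \<open>5/2 + 2Y\<^sub>S\<close>.\<close>

lemma of_int_binform:
  fixes f :: "int poly" and x y :: int
  assumes "y \<noteq> 0"
  shows "(of_int (binform f x y) :: 'a :: field_char_0)
           = of_int y ^ degree f * poly (map_poly of_int f) (of_int x / of_int y)"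
proof -
  have "(of_int y :: 'a) ^ degree f * poly (map_poly of_int f) (of_int x / of_int y)
      = (\<Sum>k\<le>degree f. of_int y ^ degree f * (of_int (coeff f k) * (of_int x / of_int y) ^ k))"
    by (simp add: poly_altdef sum_distrib_left degree_map_poly coeff_map_poly)
  also have "\<dots> = (\<Sum>k\<le>degree f. of_int (coeff f k * x ^ k * y ^ (degree f - k)))"
  proof (rule sum.cong)
    fix k assume "k \<in> {..degree f}"
    then have "(of_int y :: 'a) ^ degree f = of_int y ^ k * of_int y ^ (degree f - k)"
      by (simp flip: power_add)
    then show "of_int y ^ degree f * (of_int (coeff f k) * (of_int x / of_int y) ^ k)
        = (of_int (coeff f k * x ^ k * y ^ (degree f - k)) :: 'a)"
      using assms by (simp add: power_divide)
  qed simp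
  finally show ?thesis by (simp add: binform_def)
qed

lemma irreducible_poly_no_root:
  fixes p :: "'a :: field poly"
  assumes "irreducible p" and "degree p \<ge> 2"
  shows "poly p r \<noteq> 0"
proof
  assume "poly p r = 0"
  then have "[:-r, 1:] dvd p" by (simp add: poly_eq_0_iff_dvd)
  with \<open>irreducible p\<close> have "p dvd [:-r, 1:] \<or> is_unit [:-r, 1:]" by (rule irreducibleD')
  then have "degree p \<le> 1"
    by (auto dest: dvd_imp_degree_le simp: is_unit_iff_degree)
  with \<open>degree p \<ge> 2\<close> show False by simp
qed

lemma binform_nonzero:
  fixes f :: "int poly" and x y :: int
  assumes "irreducible (map_poly (of_int :: int \<Rightarrow> rat) f)" and "degree f \<ge> 2" and "y \<noteq> 0"
  shows "binform f x y \<noteq> 0"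
proof -
  have "poly (map_poly (of_int :: int \<Rightarrow> rat) f) (of_int x / of_int y) \<noteq> 0"
    using assms by (intro irreducible_poly_no_root) (simp_all add: degree_map_poly)
  then have "(of_int (binform f x y) :: rat) \<noteq> 0"
    using \<open>y \<noteq> 0\<close> by (simp add: of_int_binform)
  then show ?thesis by simp
qed

lemma beta_eq_of_unimodular:
  fixes x y x' y' :: int
  assumes "x' * y - x * y' = 1" and "y \<noteq> 0" and "Lf alpha j x y \<noteq> 0"
  shows "beta alpha j x y x' y' = - of_int y' / of_int y - 1 / (of_int y * Lf alpha j x y)"
proof -
  have "complex_of_int (x' * y - x * y') = 1" using assms(1) by simp
  then have "Lf alpha j x' y' * of_int y - Lf alpha j x y * of_int y' = 1"
    unfolding Lf_def by (simp add: algebra_simps)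
  then show ?thesis
    using assms(2,3) unfolding beta_def by (simp add: field_simps)
qed

lemma norm_round_sub_beta_le:
  fixes x y x' y' m :: int
  assumes det: "x' * y - x * y' = 1" and "y > 0"
    and Lj: "Lf alpha j x y \<noteq> 0" and Lk: "Lf alpha k x y \<noteq> 0"
    and m: "\<bar>Re (beta alpha j x y x' y') - of_int m\<bar> \<le> 1 / 2"
  shows "cmod (of_int m - beta alpha k x y x' y')
           \<le> 1 / 2 + 1 / (of_int y * cmod (Lf alpha j x y)) + 1 / (of_int y * cmod (Lf alpha k x y))"
proof -
  define t where "t = real_of_int m + of_int y' / of_int y"
  define zj where "zj = 1 / (of_int y * Lf alpha j x y)"
  define zk where "zk = 1 / (of_int y * Lf alpha k x y)"
  have "Re (beta alpha j x y x' y') = - of_int y' / of_int y - Re zj"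
    using beta_eq_of_unimodular[OF det _ Lj] \<open>y > 0\<close> unfolding zj_def by simp
  then have "\<bar>t\<bar> \<le> 1 / 2 + cmod zj"
    using m abs_Re_le_cmod[of zj] unfolding t_def by linarith
  moreover have "of_int m - beta alpha k x y x' y' = complex_of_real t + zk"
    using beta_eq_of_unimodular[OF det _ Lk] \<open>y > 0\<close> unfolding t_def zk_def by simp
  then have "cmod (of_int m - beta alpha k x y x' y') \<le> \<bar>t\<bar> + cmod zk"
    using norm_triangle_ineq[of "complex_of_real t" zk] by simp
  moreover have "cmod zj = 1 / (of_int y * cmod (Lf alpha j x y))"
    and "cmod zk = 1 / (of_int y * cmod (Lf alpha k x y))"
    using \<open>y > 0\<close> unfolding zj_def zk_def by (simp_all add: norm_divide norm_mult)
  ultimately show ?thesis by linarith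
qed

theorem lemma4p4:
  fixes f :: "int poly" and n s h \<kappa> :: nat and alpha :: "nat \<Rightarrow> complex"
    and x0 y0 x y :: int and i :: nat
  assumes n3: "n \<ge> 3"
    and degf: "degree f = n"
    and irr: "irreducible (map_poly (of_int :: int \<Rightarrow> rat) f)"
    and c0: "coeff f 0 \<noteq> 0"
    and sdef: "s = nterms f"
    and hpos: "h > 0"
    and kappa: "\<kappa> > 1"
    and hbound: "real h \<le> cmod (disc f alpha) powr (1 / (2 * (real n - 1) * (2 + 1 / real \<kappa>)))
                   / ((3 * R_const n) powr (real n / 2) * (real n * real s) powr (2 * real s + real n))"
    and roots: "map_poly of_int f = smult (of_int (lead_coeff f)) (\<Prod>j\<in>{1..n}. [:- alpha j, 1:])"
    and sol0: "is_solution f h x0 y0" and y0nn: "0 \<le> y0" and y0le: "real_of_int y0 \<le> Y_S n s h \<kappa>"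
    and y0min: "\<forall>u v. is_solution f h u v \<and> 0 \<le> v \<and> real_of_int v \<le> Y_S n s h \<kappa> \<longrightarrow> y0 \<le> v"
    and L1min: "\<forall>j\<in>{1..n}. cmod (Lf alpha 1 x0 y0) \<le> cmod (Lf alpha j x0 y0)"
    and i: "i \<in> {1..n}"
    and cop: "coprime x y"
    and notA: "(x, y) \<notin> {(x0, y0)} \<union> {(u, v). is_solution f h u v \<and> 0 < v \<and>
                  real_of_int v \<le> Y_S n s h \<kappa> \<and> cmod (Lf alpha 1 u v) < 1 / (2 * Y_S n s h \<kappa>)}"
    and ypos: "0 < y" and yle: "real_of_int y \<le> Y_S n s h \<kappa>"
    and Fle: "\<bar>binform f x y\<bar> \<le> int h"
    and Li: "cmod (Lf alpha i x y) > 1 / (2 * real_of_int y)"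
  shows "\<forall>x' y' m. x' * y - x * y' = 1 \<longrightarrow>
           \<bar>Re (beta alpha 1 x y x' y') - real_of_int m\<bar> \<le> 1 / 2 \<longrightarrow>
           cmod (of_int m - beta alpha i x y x' y') \<le> 7 / 2 + 2 * real h powr (1 / real n) * Y_S n s h \<kappa>"
proof (intro allI impI)
  fix x' y' m :: int
  assume det: "x' * y - x * y' = 1"
    and m: "\<bar>Re (beta alpha 1 x y x' y') - real_of_int m\<bar> \<le> 1 / 2"
  let ?Y = "Y_S n s h \<kappa>"
  have Y1: "?Y \<ge> 1" using ypos yle by linarith
  have "binform f x y \<noteq> 0"
    using binform_nonzero[OF irr] degf n3 ypos by simp
  then have "is_solution f h x y"
    using cop Fle unfolding is_solution_def by linarith
  then have L1: "cmod (Lf alpha 1 x y) \<ge> 1 / (2 * ?Y)"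
    using notA ypos yle by auto
  have L1nz: "Lf alpha 1 x y \<noteq> 0"
    using L1 Y1 by (auto simp: field_simps)
  have Linz: "Lf alpha i x y \<noteq> 0"
    using Li ypos by auto
  have "1 / (of_int y * cmod (Lf alpha 1 x y)) \<le> 1 / cmod (Lf alpha 1 x y)"
    using L1nz ypos by (simp add: divide_simps)
  also have "\<dots> \<le> 2 * ?Y"
    using L1 L1nz Y1 by (simp add: divide_simps mult.commute)
  finally have bound1: "1 / (of_int y * cmod (Lf alpha 1 x y)) \<le> 2 * ?Y" .
  have boundi: "1 / (of_int y * cmod (Lf alpha i x y)) \<le> 2"
    using Li ypos Linz by (simp add: divide_simps) (simp add: mult_ac)
  have "?Y \<le> real h powr (1 / real n) * ?Y"
    using hpos Y1 by (simp add: ge_one_powr_ge_zero)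
  with norm_round_sub_beta_le[OF det ypos L1nz Linz m] bound1 boundi
  show "cmod (of_int m - beta alpha i x y x' y') \<le> 7 / 2 + 2 * real h powr (1 / real n) * ?Y"
    by linarith
qed

end
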